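(* Let $2 \le m < 50$. In every Nash equilibrium of the imbalanced $(m,3)$-RPS, at least two players choose mixed strategies that assign positive probability to the object $S$.
   Context: An $(m,n)$-RPS game is a symmetric, zero-sum, win/lose game with $m$ players and $n$ pure strategies ("objects"), played without collusion; each player independently chooses an object (mixed strategies are allowed, Nash equilibria are in mixed strategies). The rules assign to every multiset $c$ of $m$ chosen objects a single winning object $\phi(c)\in c$; every player who chose $\phi(c)$ wins and every other player loses. If there are $m'$ winners, each winner receives payoff $\frac{m-m'}{m'}$ and each loser receives payoff $-1$. The imbalanced $(m,3)$-RPS has objects $R,P,S$ with the following rules: any multiset containing at least one $S$ and at least one $R$ is won by $R$; any multiset containing only $R$'s and $P$'s (with at least one of each) is won by $P$; any multiset containing only $P$'s and $S$'s (with at least one of each) is won by $S$; a multiset consisting of a single object type is won by that object. *)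

theory Defs
  imports Complex_Main "HOL-Library.Multiset" "HOL-Library.FuncSet"
begin

datatype obj = R | P | S

definition phi :: "obj multiset \<Rightarrow> obj" where
  "phi c = (if S \<in># c \<and> R \<in># c then R
            else if R \<in># c \<and> P \<in># c then P
            else if P \<in># c \<and> S \<in># c then S
            else the_elem (set_mset c))"

definition chosen :: "nat \<Rightarrow> (nat \<Rightarrow> obj) \<Rightarrow> obj multiset" where
  "chosen m s = image_mset s (mset_set {..<m})"

definition pure_profiles :: "nat \<Rightarrow> (nat \<Rightarrow> obj) set" where
  "pure_profiles m = PiE {..<m} (\<lambda>_. UNIV)"

definition payoff :: "nat \<Rightarrow> (nat \<Rightarrow> obj) \<Rightarrow> nat \<Rightarrow> real" where
  "payoff m s i = (let w = phi (chosen m s); m' = count (chosen m s) w in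
     if s i = w then (real m - real m') / real m' else -1)"

definition is_mixed :: "(obj \<Rightarrow> real) \<Rightarrow> bool" where
  "is_mixed q \<longleftrightarrow> (\<forall>x. q x \<ge> 0) \<and> (\<Sum>x\<in>UNIV. q x) = 1"

definition exp_payoff :: "nat \<Rightarrow> (nat \<Rightarrow> obj \<Rightarrow> real) \<Rightarrow> nat \<Rightarrow> real" where
  "exp_payoff m \<sigma> i = (\<Sum>s\<in>pure_profiles m. (\<Prod>j<m. \<sigma> j (s j)) * payoff m s i)"

definition nash_eq :: "nat \<Rightarrow> (nat \<Rightarrow> obj \<Rightarrow> real) \<Rightarrow> bool" where
  "nash_eq m \<sigma> \<longleftrightarrow> (\<forall>i<m. is_mixed (\<sigma> i)) \<and>
     (\<forall>i<m. \<forall>\<tau>. is_mixed \<tau> \<longrightarrow> exp_payoff m (\<sigma>(i := \<tau>)) i \<le> exp_payoff m \<sigma> i)"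

end

theory Submission
  imports Defs "HOL-Analysis.Infinite_Products"
begin

(* Suppose that at most one player puts positive weight on S.

   If nobody does, every player has a pure deviation with positive expected payoff. Let \<rho> be the
   opponents' total weight on R. Deviating to P earns at least \<rho>/m, and deviating to S, which wins
   exactly against the all-P profile, earns m \<Prod>P - 1 \<ge> m(1 - \<rho>) - 1 by the Weierstrass product
   inequality. Either way the value is positive, contradicting that the payoffs sum to zero.

   If exactly one player i0 does, indifference on the support of i0 rules out R for i0 and gives
   i0 the value mA - 1, where A is the probability that all others play P. Each other player can
   deviate to S or to R, and the R-payoff m/(1 + N) - 1 is bounded below by one of its tangents.
   Summing these bounds against the zero-sum identity gives polynomial inequalities in A, \<rho> and
   the weight of i0 on S, and these have no solution. *)

lemma UNIV_obj: "(UNIV :: obj set) = {R, P, S}"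
  using obj.exhaust by auto

instance obj :: finite
  by standard (simp add: UNIV_obj)

lemma sum_UNIV_obj: "(\<Sum>x\<in>UNIV. f x) = f R + f P + (f S :: real)"
  by (simp add: UNIV_obj)

definition pure_strategy :: "'a \<Rightarrow> 'a \<Rightarrow> real" where
  "pure_strategy x = (\<lambda>y. of_bool (y = x))"

lemma is_mixed_pure_strategy: "is_mixed (pure_strategy x)"
  unfolding is_mixed_def by (simp add: pure_strategy_def)

definition expect :: "nat \<Rightarrow> (nat \<Rightarrow> 'a::finite \<Rightarrow> real) \<Rightarrow> ((nat \<Rightarrow> 'a) \<Rightarrow> real) \<Rightarrow> real" where
  "expect m \<sigma> F = (\<Sum>s\<in>PiE {..<m} (\<lambda>_. UNIV). (\<Prod>j<m. \<sigma> j (s j)) * F s)"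

lemma exp_payoff_eq_expect: "exp_payoff m \<sigma> i = expect m \<sigma> (\<lambda>s. payoff m s i)"
  unfolding exp_payoff_def expect_def pure_profiles_def ..

lemma expect_diff: "expect m \<sigma> (\<lambda>s. F s - G s) = expect m \<sigma> F - expect m \<sigma> G"
  unfolding expect_def by (simp add: right_diff_distrib sum_subtractf)

lemma expect_cmult: "expect m \<sigma> (\<lambda>s. c * F s) = c * expect m \<sigma> F"
  unfolding expect_def by (simp add: sum_distrib_left mult.left_commute)

lemma expect_sum: "expect m \<sigma> (\<lambda>s. \<Sum>l\<in>L. F l s) = (\<Sum>l\<in>L. expect m \<sigma> (F l))"
  unfolding expect_def by (simp add: sum_distrib_left sum.swap[of _ L])

lemma expect_zero [simp]: "expect m \<sigma> (\<lambda>s. 0) = 0"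
  unfolding expect_def by simp

lemma expect_prod:
  assumes T: "T \<subseteq> {..<m}" and distr: "\<And>j. j < m \<Longrightarrow> (\<Sum>x\<in>UNIV. \<sigma> j x) = 1"
  shows "expect m \<sigma> (\<lambda>s. \<Prod>j\<in>T. g j (s j)) = (\<Prod>j\<in>T. \<Sum>x\<in>UNIV. \<sigma> j x * g j x)"
proof -
  define h where "h j x = \<sigma> j x * (if j \<in> T then g j x else 1)" for j x
  have restrict: "(\<Prod>j\<in>T. f j) = (\<Prod>j<m. if j \<in> T then f j else 1)" for f :: "nat \<Rightarrow> real"
    using T by (simp add: prod.If_cases Int_absorb1 inf.absorb2)
  have "expect m \<sigma> (\<lambda>s. \<Prod>j\<in>T. g j (s j)) = (\<Sum>s\<in>PiE {..<m} (\<lambda>_. UNIV). \<Prod>j<m. h j (s j))"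
    unfolding expect_def h_def by (simp add: restrict prod.distrib)
  also have "\<dots> = (\<Prod>j<m. \<Sum>x\<in>UNIV. h j x)"
    by (rule prod_sum_PiE[symmetric]) auto
  also have "\<dots> = (\<Prod>j<m. if j \<in> T then (\<Sum>x\<in>UNIV. \<sigma> j x * g j x) else 1)"
    unfolding h_def by (intro prod.cong refl) (auto simp: distr)
  also have "\<dots> = (\<Prod>j\<in>T. \<Sum>x\<in>UNIV. \<sigma> j x * g j x)"
    by (rule restrict[symmetric])
  finally show ?thesis .
qed

lemma expect_const:
  assumes "\<And>j. j < m \<Longrightarrow> (\<Sum>x\<in>UNIV. \<sigma> j x) = 1"
  shows "expect m \<sigma> (\<lambda>s. c) = c"
  using expect_cmult[of m \<sigma> c "\<lambda>s. 1"] expect_prod[of "{}" m \<sigma>, OF _ assms] by simp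

lemma expect_prod_indicator:
  assumes "T \<subseteq> {..<m}" and "\<And>j. j < m \<Longrightarrow> (\<Sum>x\<in>UNIV. \<sigma> j x) = 1"
  shows "expect m \<sigma> (\<lambda>s. \<Prod>j\<in>T. of_bool (s j = t j)) = (\<Prod>j\<in>T. \<sigma> j (t j))"
  using expect_prod[where g = "\<lambda>j x. of_bool (x = t j)", OF assms] by simp

lemma expect_indicator:
  assumes "k < m" and "\<And>j. j < m \<Longrightarrow> (\<Sum>x\<in>UNIV. \<sigma> j x) = 1"
  shows "expect m \<sigma> (\<lambda>s. of_bool (s k = x)) = \<sigma> k x"
  using expect_prod_indicator[of "{k}" m \<sigma> "\<lambda>_. x"] assms by simp

lemma expect_mono:
  assumes "\<And>j x. j < m \<Longrightarrow> 0 \<le> \<sigma> j x"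
    and "\<And>s. (\<And>j. j < m \<Longrightarrow> \<sigma> j (s j) \<noteq> 0) \<Longrightarrow> F s \<le> G s"
  shows "expect m \<sigma> F \<le> expect m \<sigma> G"
  unfolding expect_def
proof (intro sum_mono)
  fix s
  show "(\<Prod>j<m. \<sigma> j (s j)) * F s \<le> (\<Prod>j<m. \<sigma> j (s j)) * G s"
  proof (cases "\<exists>j<m. \<sigma> j (s j) = 0")
    case True
    then have "(\<Prod>j<m. \<sigma> j (s j)) = 0" by auto
    then show ?thesis by (metis mult_zero_left order.refl)
  next
    case False
    then have "F s \<le> G s" using assms(2) by blast
    moreover have "0 \<le> (\<Prod>j<m. \<sigma> j (s j))" using assms(1) by (intro prod_nonneg) auto
    ultimately show ?thesis by (rule mult_left_mono)
  qed
qed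

lemma expect_cong:
  assumes "\<And>s. (\<And>j. j < m \<Longrightarrow> \<sigma> j (s j) \<noteq> 0) \<Longrightarrow> F s = G s"
  shows "expect m \<sigma> F = expect m \<sigma> G"
  unfolding expect_def
proof (intro sum.cong refl)
  fix s
  show "(\<Prod>j<m. \<sigma> j (s j)) * F s = (\<Prod>j<m. \<sigma> j (s j)) * G s"
  proof (cases "\<exists>j<m. \<sigma> j (s j) = 0")
    case True
    then have "(\<Prod>j<m. \<sigma> j (s j)) = 0" by auto
    then show ?thesis by simp
  next
    case False
    then show ?thesis using assms by auto
  qed
qed

lemma expect_fun_upd:
  assumes "i < m"
  shows "expect m (\<sigma>(i := \<tau>)) F = (\<Sum>x\<in>UNIV. \<tau> x * expect m (\<sigma>(i := pure_strategy x)) F)"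
proof -
  define Q where "Q s = (\<Prod>j\<in>{..<m}-{i}. \<sigma> j (s j))" for s
  have weight: "(\<Prod>j<m. (\<sigma>(i := \<rho>)) j (s j)) = \<rho> (s i) * Q s" for \<rho> s
  proof -
    have "(\<Prod>j<m. (\<sigma>(i := \<rho>)) j (s j)) = \<rho> (s i) * (\<Prod>j\<in>{..<m}-{i}. (\<sigma>(i := \<rho>)) j (s j))"
      using assms by (simp add: prod.remove)
    also have "(\<Prod>j\<in>{..<m}-{i}. (\<sigma>(i := \<rho>)) j (s j)) = Q s"
      unfolding Q_def by (intro prod.cong) auto
    finally show ?thesis by simp
  qed
  have "(\<Sum>x\<in>UNIV. \<tau> x * expect m (\<sigma>(i := pure_strategy x)) F)
      = (\<Sum>s\<in>PiE {..<m} (\<lambda>_. UNIV). \<Sum>x\<in>UNIV. \<tau> x * (pure_strategy x (s i) * Q s * F s))"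
    unfolding expect_def weight by (simp add: sum_distrib_left sum.swap[of _ UNIV])
  also have "\<dots> = (\<Sum>s\<in>PiE {..<m} (\<lambda>_. UNIV). \<tau> (s i) * Q s * F s)"
  proof (intro sum.cong refl)
    fix s :: "nat \<Rightarrow> 'a"
    have "(\<Sum>x\<in>UNIV. \<tau> x * (pure_strategy x (s i) * Q s * F s))
        = (\<Sum>x\<in>UNIV. if x = s i then \<tau> x * Q s * F s else 0)"
      by (intro sum.cong) (auto simp: pure_strategy_def)
    then show "(\<Sum>x\<in>UNIV. \<tau> x * (pure_strategy x (s i) * Q s * F s)) = \<tau> (s i) * Q s * F s"
      by simp
  qed
  also have "\<dots> = expect m (\<sigma>(i := \<tau>)) F"
    unfolding expect_def weight by (simp add: mult.assoc)
  finally show ?thesis ..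
qed

lemma expect_divide: "expect m \<sigma> (\<lambda>s. F s / c) = expect m \<sigma> F / c"
  using expect_cmult[of m \<sigma> "1 / c" F] by simp

lemma expect_indicator_mult_prod:
  assumes "k < m" and "T \<subseteq> {..<m}" and "k \<notin> T"
    and "\<And>j. j < m \<Longrightarrow> (\<Sum>x\<in>UNIV. \<sigma> j x) = 1"
  shows "expect m \<sigma> (\<lambda>s. of_bool (s k = x) * (\<Prod>j\<in>T. of_bool (s j = y))) = \<sigma> k x * (\<Prod>j\<in>T. \<sigma> j y)"
proof -
  define t where "t = (\<lambda>_. y)(k := x)"
  have fin: "finite T" using assms(2) finite_subset by blast
  have t: "t k = x" "\<And>j. j \<in> T \<Longrightarrow> t j = y" unfolding t_def using assms(3) by auto
  have "(\<lambda>s. of_bool (s k = x) * (\<Prod>j\<in>T. of_bool (s j = y))) = (\<lambda>s. \<Prod>j\<in>insert k T. of_bool (s j = t j))"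
    using fin assms(3) t by (simp cong: prod.cong)
  then have "expect m \<sigma> (\<lambda>s. of_bool (s k = x) * (\<Prod>j\<in>T. of_bool (s j = y)))
      = expect m \<sigma> (\<lambda>s. \<Prod>j\<in>insert k T. of_bool (s j = t j))" by (rule arg_cong)
  also have "\<dots> = (\<Prod>j\<in>insert k T. \<sigma> j (t j))"
    by (rule expect_prod_indicator) (use assms in auto)
  also have "\<dots> = \<sigma> k x * (\<Prod>j\<in>T. \<sigma> j y)"
    using fin assms(3) t by (simp cong: prod.cong)
  finally show ?thesis .
qed

definition mixed_profile :: "nat \<Rightarrow> (nat \<Rightarrow> obj \<Rightarrow> real) \<Rightarrow> bool" where
  "mixed_profile m \<sigma> \<longleftrightarrow> (\<forall>i<m. is_mixed (\<sigma> i))"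

lemma mixed_profile_nonneg: "mixed_profile m \<sigma> \<Longrightarrow> j < m \<Longrightarrow> 0 \<le> \<sigma> j x"
  unfolding mixed_profile_def is_mixed_def by blast

lemma mixed_profile_sum: "mixed_profile m \<sigma> \<Longrightarrow> j < m \<Longrightarrow> (\<Sum>x\<in>UNIV. \<sigma> j x) = 1"
  unfolding mixed_profile_def is_mixed_def by blast

lemma mixed_profile_fun_upd: "mixed_profile m \<sigma> \<Longrightarrow> is_mixed \<tau> \<Longrightarrow> mixed_profile m (\<sigma>(i := \<tau>))"
  unfolding mixed_profile_def by simp

lemma nash_eq_mixed_profile: "nash_eq m \<sigma> \<Longrightarrow> mixed_profile m \<sigma>"
  unfolding nash_eq_def mixed_profile_def by blast

lemma nash_eq_pure_deviation:
  "nash_eq m \<sigma> \<Longrightarrow> i < m \<Longrightarrow> exp_payoff m (\<sigma>(i := pure_strategy x)) i \<le> exp_payoff m \<sigma> i"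
  unfolding nash_eq_def using is_mixed_pure_strategy by blast

lemma nash_eq_indifferent_on_support:
  assumes eq: "nash_eq m \<sigma>" and i: "i < m" and x: "0 < \<sigma> i x"
  shows "exp_payoff m (\<sigma>(i := pure_strategy x)) i = exp_payoff m \<sigma> i"
proof -
  define v where "v = exp_payoff m \<sigma> i"
  define u where "u y = exp_payoff m (\<sigma>(i := pure_strategy y)) i" for y
  have mixed: "mixed_profile m \<sigma>" using eq by (rule nash_eq_mixed_profile)
  have "v = (\<Sum>y\<in>UNIV. \<sigma> i y * u y)"
    using expect_fun_upd[OF i, of \<sigma> "\<sigma> i"] unfolding v_def u_def exp_payoff_eq_expect by simp
  then have "(\<Sum>y\<in>UNIV. \<sigma> i y * (v - u y)) = 0"
    using mixed_profile_sum[OF mixed i]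
    by (simp add: right_diff_distrib sum_subtractf flip: sum_distrib_right)
  moreover have "0 \<le> \<sigma> i y * (v - u y)" for y
    using mixed_profile_nonneg[OF mixed i] nash_eq_pure_deviation[OF eq i] unfolding u_def v_def by simp
  ultimately have "\<sigma> i x * (v - u x) = 0"
    by (simp add: sum_nonneg_eq_0_iff)
  then show ?thesis using x unfolding u_def v_def by simp
qed

lemma pure_deviation_sum_eq_1:
  "mixed_profile m \<sigma> \<Longrightarrow> j < m \<Longrightarrow> (\<Sum>y\<in>UNIV. (\<sigma>(i := pure_strategy x)) j y) = 1"
  by (rule mixed_profile_sum[OF mixed_profile_fun_upd[OF _ is_mixed_pure_strategy]])

lemma pure_deviation_nonneg:
  "mixed_profile m \<sigma> \<Longrightarrow> j < m \<Longrightarrow> 0 \<le> (\<sigma>(i := pure_strategy x)) j y"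
  by (rule mixed_profile_nonneg[OF mixed_profile_fun_upd[OF _ is_mixed_pure_strategy]])

lemma mem_chosen: "x \<in># chosen m s \<longleftrightarrow> (\<exists>i<m. s i = x)"
  unfolding chosen_def by auto

lemma count_chosen: "count (chosen m s) x = card {i. i < m \<and> s i = x}"
proof -
  have "{..<m} \<inter> s -` {x} = {i. i < m \<and> s i = x}" by auto
  then show ?thesis unfolding chosen_def by (simp add: count_image_mset Int_commute)
qed

lemma phi_R_beats_S: "S \<in># c \<Longrightarrow> R \<in># c \<Longrightarrow> phi c = R"
  by (simp add: phi_def)

lemma phi_S_without_R:
  assumes "S \<in># c" and "R \<notin># c"
  shows "phi c = S"
proof (cases "P \<in># c")
  case False
  have "y = S" if "y \<in># c" for y
    using that assms False by (cases y) auto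
  then have "set_mset c = {S}" using assms(1) by blast
  then show ?thesis using assms False by (simp add: phi_def)
qed (use assms in \<open>simp add: phi_def\<close>)

lemma phi_P_without_S:
  assumes "P \<in># c" and "S \<notin># c"
  shows "phi c = P"
proof (cases "R \<in># c")
  case False
  have "y = P" if "y \<in># c" for y
    using that assms False by (cases y) auto
  then have "set_mset c = {P}" using assms(1) by blast
  then show ?thesis using assms False by (simp add: phi_def)
qed (use assms in \<open>simp add: phi_def\<close>)

lemma phi_only_R:
  assumes "R \<in># c" and "P \<notin># c" and "S \<notin># c"
  shows "phi c = R"
proof -
  have "y = R" if "y \<in># c" for y
    using that assms by (cases y) auto
  then have "set_mset c = {R}" using assms(1) by blast
  then show ?thesis using assms by (simp add: phi_def)
qed

lemma phi_in_mset:
  assumes "c \<noteq> {#}"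
  shows "phi c \<in># c"
proof -
  obtain y where y: "y \<in># c" using assms by blast
  consider "S \<in># c" "R \<in># c" | "S \<in># c" "R \<notin># c" | "P \<in># c" "S \<notin># c"
    | "R \<in># c" "P \<notin># c" "S \<notin># c"
    using y by (cases y) auto
  then show ?thesis
    by cases (simp_all add: phi_R_beats_S phi_S_without_R phi_P_without_S phi_only_R)
qed

lemma payoff_loser: "s i \<noteq> phi (chosen m s) \<Longrightarrow> payoff m s i = -1"
  unfolding payoff_def Let_def by simp

lemma payoff_winner:
  assumes "s i = phi (chosen m s)" and "card {j. j < m \<and> s j = s i} = k"
  shows "payoff m s i = (real m - real k) / real k"
  using assms unfolding payoff_def Let_def count_chosen by simp

lemma payoff_sum_zero: "(\<Sum>i<m. payoff m s i) = 0"
proof (cases "m = 0")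
  case False
  define W where "W = {i. i < m \<and> s i = phi (chosen m s)}"
  define k where "k = card W"
  have W: "W \<subseteq> {..<m}" "finite W" unfolding W_def by auto
  have "s 0 \<in># chosen m s" using False unfolding mem_chosen by blast
  then have "phi (chosen m s) \<in># chosen m s" by (intro phi_in_mset) auto
  then have "W \<noteq> {}" unfolding W_def mem_chosen by blast
  then have k: "0 < k" "k \<le> m" unfolding k_def using card_mono[OF _ W(1)] W(2) by auto
  have "payoff m s i = (if i \<in> W then (real m - k) / k else -1)" if "i < m" for i
  proof (cases "i \<in> W")
    case True
    then have "{j. j < m \<and> s j = s i} = W" unfolding W_def by auto
    moreover have "s i = phi (chosen m s)" using True unfolding W_def by simp
    ultimately have "payoff m s i = (real m - k) / k" unfolding k_def by (intro payoff_winner) simp_all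
    with True show ?thesis by simp
  qed (use that in \<open>auto simp: W_def payoff_loser\<close>)
  then have "(\<Sum>i<m. payoff m s i) = (\<Sum>i<m. if i \<in> W then (real m - k) / k else -1)"
    by simp
  also have "\<dots> = k * ((real m - k) / k) - card ({..<m} - W)"
    using W unfolding k_def by (simp add: sum.If_cases Int_absorb1 Diff_eq)
  also have "\<dots> = 0"
    using k W by (simp add: card_Diff_subset k_def[symmetric] of_nat_diff)
  finally show ?thesis .
qed simp

lemma exp_payoff_sum_zero: "(\<Sum>i<m. exp_payoff m \<sigma> i) = 0"
  unfolding exp_payoff_eq_expect by (simp add: payoff_sum_zero flip: expect_sum)

lemma payoff_lone_S:
  assumes i: "i < m" and si: "s i = S" and others: "\<And>l. l < m \<Longrightarrow> l \<noteq> i \<Longrightarrow> s l \<noteq> S"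
  shows "payoff m s i = real m * (\<Prod>l\<in>{..<m}-{i}. of_bool (s l = P)) - 1"
proof (cases "\<exists>l<m. s l = R")
  case True
  then obtain l where l: "l < m" "s l = R" by blast
  then have "phi (chosen m s) = R" using i si by (intro phi_R_beats_S) (auto simp: mem_chosen)
  then have "payoff m s i = -1" using si by (simp add: payoff_loser)
  moreover have "(\<Prod>l\<in>{..<m}-{i}. of_bool (s l = P)) = (0::real)"
    using l si by (intro prod_zero bexI[of _ l]) auto
  ultimately show ?thesis by simp
next
  case False
  have "s l = P" if "l \<in> {..<m}-{i}" for l
    using that others False by (cases "s l") auto
  then have "(\<Prod>l\<in>{..<m}-{i}. of_bool (s l = P)) = (1::real)" by (intro prod.neutral) simp
  moreover have "phi (chosen m s) = S" using i si False by (intro phi_S_without_R) (auto simp: mem_chosen)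
  moreover have "{j. j < m \<and> s j = s i} = {i}" using i si others by auto
  ultimately show ?thesis using si by (simp add: payoff_winner)
qed

lemma payoff_S_with_rival:
  assumes j: "j < m" and i0: "i0 < m" "j \<noteq> i0" and sj: "s j = S" and si0: "s i0 \<noteq> R"
    and others: "\<And>l. l < m \<Longrightarrow> l \<noteq> j \<Longrightarrow> l \<noteq> i0 \<Longrightarrow> s l \<noteq> S"
  shows "payoff m s j = real m * (1 - of_bool (s i0 = S) / 2) * (\<Prod>l\<in>{..<m}-{j,i0}. of_bool (s l = P)) - 1"
proof (cases "\<exists>l\<in>{..<m}-{j,i0}. s l = R")
  case True
  then obtain l where l: "l \<in> {..<m}-{j,i0}" "s l = R" by blast
  then have "phi (chosen m s) = R" using j sj by (intro phi_R_beats_S) (auto simp: mem_chosen)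
  then have "payoff m s j = -1" using sj by (simp add: payoff_loser)
  moreover have "(\<Prod>l\<in>{..<m}-{j,i0}. of_bool (s l = P)) = (0::real)"
    using l by (intro prod_zero bexI[of _ l]) auto
  ultimately show ?thesis by simp
next
  case False
  have P: "s l = P" if "l \<in> {..<m}-{j,i0}" for l
    using that others False by (cases "s l") auto
  then have "(\<Prod>l\<in>{..<m}-{j,i0}. of_bool (s l = P)) = (1::real)" by (intro prod.neutral) simp
  moreover have "s l \<noteq> R" if "l < m" for l
    using that P[of l] sj si0 by (cases "l = j \<or> l = i0") auto
  then have "phi (chosen m s) = S" using j sj by (intro phi_S_without_R) (auto simp: mem_chosen)
  moreover have "{l. l < m \<and> s l = s j} = (if s i0 = S then {j, i0} else {j})"
    using others sj j i0 by auto
  ultimately show ?thesis using sj i0(2) by (simp add: payoff_winner field_simps)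
qed

lemma payoff_P_without_S:
  assumes i: "i < m" and si: "s i = P" and no_S: "\<And>l. l < m \<Longrightarrow> s l \<noteq> S"
  shows "(\<Sum>l\<in>{..<m}-{i}. of_bool (s l = R)) / real m \<le> payoff m s i"
proof -
  define N where "N = card {l. l < m \<and> s l = P}"
  have "s l = R \<longleftrightarrow> s l \<noteq> P" if "l < m" for l
    using no_S[OF that] by (cases "s l") auto
  then have "{l. l < m \<and> s l = R} = {..<m} - {l. l < m \<and> s l = P}" by auto
  also have "card \<dots> = m - N" unfolding N_def by (subst card_Diff_subset) auto
  finally have R: "card {l. l < m \<and> s l = R} = m - N" .
  have N: "0 < N" "N \<le> m"
    unfolding N_def using i si by (auto simp: card_gt_0_iff intro: card_mono[of "{..<m}", simplified])
  have "phi (chosen m s) = P" using i si no_S by (intro phi_P_without_S) (auto simp: mem_chosen)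
  then have "payoff m s i = (real m - N) / N" using si by (simp add: payoff_winner N_def)
  moreover have "(\<Sum>l\<in>{..<m}-{i}. of_bool (s l = R)) = real m - N"
  proof -
    have "({..<m}-{i}) \<inter> {l. s l = R} = {l. l < m \<and> s l = R}" using si by auto
    then show ?thesis using R N by (simp add: of_nat_diff)
  qed
  moreover have "(real m - N) / m \<le> (real m - N) / N" using N by (intro divide_left_mono) auto
  ultimately show ?thesis by simp
qed

lemma payoff_R_without_S_nonpos:
  assumes i: "i < m" and si: "s i = R" and no_S: "\<And>l. l < m \<Longrightarrow> s l \<noteq> S"
  shows "payoff m s i \<le> 0"
proof (cases "P \<in># chosen m s")
  case True
  then have "phi (chosen m s) = P" using no_S by (intro phi_P_without_S) (auto simp: mem_chosen)
  then show ?thesis using si by (simp add: payoff_loser)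
next
  case False
  then have "phi (chosen m s) = R" using i si no_S by (intro phi_only_R) (auto simp: mem_chosen)
  moreover have "s l = R" if "l < m" for l
    using False no_S[OF that] that by (cases "s l") (auto simp: mem_chosen)
  then have "{l. l < m \<and> s l = s i} = {..<m}" using si by auto
  ultimately show ?thesis using si by (simp add: payoff_winner)
qed

lemma tangent_le_inverse:
  fixes a N :: real
  assumes "0 < 1 + N"
  shows "(1 + 2 * a - N) / (1 + a)^2 \<le> 1 / (1 + N)"
proof (cases "a = -1")
  case False
  have "(1 + 2 * a - N) * (1 + N) = (1 + a)^2 - (a - N)^2" by algebra
  then have "(1 + 2 * a - N) * (1 + N) \<le> (1 + a)^2" by simp
  then show ?thesis using assms False by (simp add: divide_simps)
qed (use assms in simp)

(* When the rival plays S, R earns m / (1 + N) - 1 against N further R-players, a convex function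
   of N. Its tangent at an arbitrary point a is affine in the opponents' indicators, so its
   expectation factorises. *)
lemma payoff_R_with_rival_ge:
  assumes j: "j < m" and i0: "i0 < m" "j \<noteq> i0" and sj: "s j = R" and si0: "s i0 \<noteq> R"
    and others: "\<And>l. l < m \<Longrightarrow> l \<noteq> j \<Longrightarrow> l \<noteq> i0 \<Longrightarrow> s l \<noteq> S"
  shows "real m / (1 + a)^2 * ((1 + 2 * a) * of_bool (s i0 = S)
           - (\<Sum>l\<in>{..<m}-{j,i0}. of_bool (s i0 = S) * of_bool (s l = R))) - 1 \<le> payoff m s j"
proof (cases "s i0 = S")
  case True
  define N where "N = card (({..<m}-{j,i0}) \<inter> {l. s l = R})"
  have "phi (chosen m s) = R" using i0 j sj True by (intro phi_R_beats_S) (auto simp: mem_chosen)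
  moreover have "{l. l < m \<and> s l = s j} = insert j (({..<m}-{j,i0}) \<inter> {l. s l = R})"
    using j sj True by auto
  ultimately have "payoff m s j = (real m - (1 + N)) / (1 + N)"
    using sj by (simp add: payoff_winner N_def)
  also have "\<dots> = real m * (1 / (1 + N)) - 1" by (simp add: field_simps)
  finally have "payoff m s j = real m * (1 / (1 + N)) - 1" .
  moreover have "real m * ((1 + 2 * a - N) / (1 + a)^2) \<le> real m * (1 / (1 + N))"
    using tangent_le_inverse[of "real N" a] by (intro mult_left_mono) auto
  ultimately show ?thesis using True by (simp add: N_def)
next
  case False
  have "s i0 = P" using si0 False by (cases "s i0") auto
  moreover have "s l \<noteq> S" if "l < m" for l
    using that sj False others by (cases "l = j \<or> l = i0") auto
  ultimately have "phi (chosen m s) = P" using i0 by (intro phi_P_without_S) (auto simp: mem_chosen)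
  then show ?thesis using False sj by (simp add: payoff_loser)
qed

lemma exp_payoff_deviate_lone_S:
  assumes mixed: "mixed_profile m \<sigma>" and i: "i < m"
    and no_S: "\<And>l. l < m \<Longrightarrow> l \<noteq> i \<Longrightarrow> \<sigma> l S = 0"
  shows "exp_payoff m (\<sigma>(i := pure_strategy S)) i = real m * (\<Prod>l\<in>{..<m}-{i}. \<sigma> l P) - 1"
proof -
  let ?\<sigma> = "\<sigma>(i := pure_strategy S)"
  have distr: "\<And>j. j < m \<Longrightarrow> (\<Sum>y\<in>UNIV. ?\<sigma> j y) = 1" using mixed by (rule pure_deviation_sum_eq_1)
  have "exp_payoff m ?\<sigma> i = expect m ?\<sigma> (\<lambda>s. real m * (\<Prod>l\<in>{..<m}-{i}. of_bool (s l = P)) - 1)"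
    unfolding exp_payoff_eq_expect
  proof (rule expect_cong)
    fix s assume supp: "\<And>j. j < m \<Longrightarrow> ?\<sigma> j (s j) \<noteq> 0"
    show "payoff m s i = real m * (\<Prod>l\<in>{..<m}-{i}. of_bool (s l = P)) - 1"
    proof (rule payoff_lone_S[OF i])
      show "s i = S" using supp[OF i] by (simp add: pure_strategy_def)
      show "s l \<noteq> S" if "l < m" "l \<noteq> i" for l using supp[OF that(1)] that no_S by auto
    qed
  qed
  also have "\<dots> = real m * (\<Prod>l\<in>{..<m}-{i}. ?\<sigma> l P) - 1"
    by (simp add: expect_diff expect_cmult expect_const[OF distr] expect_prod_indicator[OF _ distr])
  also have "(\<Prod>l\<in>{..<m}-{i}. ?\<sigma> l P) = (\<Prod>l\<in>{..<m}-{i}. \<sigma> l P)"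
    by (intro prod.cong) auto
  finally show ?thesis .
qed

lemma exp_payoff_deviate_P_ge:
  assumes mixed: "mixed_profile m \<sigma>" and i: "i < m"
    and no_S: "\<And>l. l < m \<Longrightarrow> l \<noteq> i \<Longrightarrow> \<sigma> l S = 0"
  shows "(\<Sum>l\<in>{..<m}-{i}. \<sigma> l R) / real m \<le> exp_payoff m (\<sigma>(i := pure_strategy P)) i"
proof -
  let ?\<sigma> = "\<sigma>(i := pure_strategy P)"
  have distr: "\<And>j. j < m \<Longrightarrow> (\<Sum>y\<in>UNIV. ?\<sigma> j y) = 1" using mixed by (rule pure_deviation_sum_eq_1)
  have "(\<Sum>l\<in>{..<m}-{i}. \<sigma> l R) = (\<Sum>l\<in>{..<m}-{i}. expect m ?\<sigma> (\<lambda>s. of_bool (s l = R)))"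
    using expect_indicator[of _ m ?\<sigma> R, OF _ distr] by (intro sum.cong) auto
  then have "(\<Sum>l\<in>{..<m}-{i}. \<sigma> l R) / real m = expect m ?\<sigma> (\<lambda>s. (\<Sum>l\<in>{..<m}-{i}. of_bool (s l = R)) / real m)"
    by (simp only: expect_divide expect_sum)
  also have "\<dots> \<le> exp_payoff m ?\<sigma> i"
    unfolding exp_payoff_eq_expect
  proof (rule expect_mono)
    fix s assume supp: "\<And>j. j < m \<Longrightarrow> ?\<sigma> j (s j) \<noteq> 0"
    show "(\<Sum>l\<in>{..<m}-{i}. of_bool (s l = R)) / real m \<le> payoff m s i"
    proof (rule payoff_P_without_S[OF i])
      show "s i = P" using supp[OF i] by (simp add: pure_strategy_def)
      show "s l \<noteq> S" if "l < m" for l using supp[OF that] no_S[OF that] \<open>s i = P\<close> by (cases "l = i") auto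
    qed
  qed (use mixed pure_deviation_nonneg in blast)
  finally show ?thesis .
qed

lemma exp_payoff_deviate_R_nonpos:
  assumes mixed: "mixed_profile m \<sigma>" and i: "i < m"
    and no_S: "\<And>l. l < m \<Longrightarrow> l \<noteq> i \<Longrightarrow> \<sigma> l S = 0"
  shows "exp_payoff m (\<sigma>(i := pure_strategy R)) i \<le> 0"
proof -
  let ?\<sigma> = "\<sigma>(i := pure_strategy R)"
  have "exp_payoff m ?\<sigma> i \<le> expect m ?\<sigma> (\<lambda>s. 0)"
    unfolding exp_payoff_eq_expect
  proof (rule expect_mono)
    fix s assume supp: "\<And>j. j < m \<Longrightarrow> ?\<sigma> j (s j) \<noteq> 0"
    show "payoff m s i \<le> 0"
    proof (rule payoff_R_without_S_nonpos[OF i])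
      show "s i = R" using supp[OF i] by (simp add: pure_strategy_def)
      show "s l \<noteq> S" if "l < m" for l using supp[OF that] no_S[OF that] \<open>s i = R\<close> by (cases "l = i") auto
    qed
  qed (use mixed pure_deviation_nonneg in blast)
  then show ?thesis by simp
qed

lemma exp_payoff_deviate_S_with_rival:
  assumes mixed: "mixed_profile m \<sigma>" and j: "j < m" and i0: "i0 < m" "j \<noteq> i0"
    and no_S: "\<And>l. l < m \<Longrightarrow> l \<noteq> i0 \<Longrightarrow> \<sigma> l S = 0" and no_R: "\<sigma> i0 R = 0"
  shows "exp_payoff m (\<sigma>(j := pure_strategy S)) j
           = real m * (1 - \<sigma> i0 S / 2) * (\<Prod>l\<in>{..<m}-{j,i0}. \<sigma> l P) - 1"
proof -
  let ?\<sigma> = "\<sigma>(j := pure_strategy S)" and ?O = "{..<m}-{j,i0}"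
  have distr: "\<And>l. l < m \<Longrightarrow> (\<Sum>y\<in>UNIV. ?\<sigma> l y) = 1" using mixed by (rule pure_deviation_sum_eq_1)
  have "exp_payoff m ?\<sigma> j = expect m ?\<sigma> (\<lambda>s. real m * (\<Prod>l\<in>?O. of_bool (s l = P))
          - real m / 2 * (of_bool (s i0 = S) * (\<Prod>l\<in>?O. of_bool (s l = P))) - 1)"
    unfolding exp_payoff_eq_expect
  proof (rule expect_cong)
    fix s assume supp: "\<And>l. l < m \<Longrightarrow> ?\<sigma> l (s l) \<noteq> 0"
    have "s j = S" using supp[OF j] by (simp add: pure_strategy_def)
    moreover have "s i0 \<noteq> R" using supp[OF i0(1)] i0(2) no_R by auto
    moreover have "s l \<noteq> S" if "l < m" "l \<noteq> j" "l \<noteq> i0" for l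
      using supp[OF that(1)] that no_S by auto
    ultimately show "payoff m s j = real m * (\<Prod>l\<in>?O. of_bool (s l = P))
          - real m / 2 * (of_bool (s i0 = S) * (\<Prod>l\<in>?O. of_bool (s l = P))) - 1"
      using payoff_S_with_rival[OF j i0] by (simp add: algebra_simps)
  qed
  also have "\<dots> = real m * (\<Prod>l\<in>?O. ?\<sigma> l P) - real m / 2 * (?\<sigma> i0 S * (\<Prod>l\<in>?O. ?\<sigma> l P)) - 1"
    using i0 by (simp only: expect_diff expect_cmult expect_const[OF distr])
      (simp add: expect_prod_indicator[OF _ distr] expect_indicator_mult_prod[OF _ _ _ distr])
  also have "(\<Prod>l\<in>?O. ?\<sigma> l P) = (\<Prod>l\<in>?O. \<sigma> l P)"
    by (intro prod.cong) auto
  also have "real m * (\<Prod>l\<in>?O. \<sigma> l P) - real m / 2 * (?\<sigma> i0 S * (\<Prod>l\<in>?O. \<sigma> l P)) - 1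
      = real m * (1 - \<sigma> i0 S / 2) * (\<Prod>l\<in>?O. \<sigma> l P) - 1"
    using i0(2) by (simp add: algebra_simps)
  finally show ?thesis .
qed

lemma expect_indicator_pair:
  assumes "k < m" and "l < m" and "k \<noteq> l" and "\<And>j. j < m \<Longrightarrow> (\<Sum>x\<in>UNIV. \<sigma> j x) = 1"
  shows "expect m \<sigma> (\<lambda>s. of_bool (s k = x) * of_bool (s l = y)) = \<sigma> k x * \<sigma> l y"
  using expect_indicator_mult_prod[of k m "{l}" \<sigma> x y] assms by simp

lemma exp_payoff_deviate_R_with_rival_ge:
  assumes mixed: "mixed_profile m \<sigma>" and j: "j < m" and i0: "i0 < m" "j \<noteq> i0"
    and no_S: "\<And>l. l < m \<Longrightarrow> l \<noteq> i0 \<Longrightarrow> \<sigma> l S = 0" and no_R: "\<sigma> i0 R = 0"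
  shows "real m * \<sigma> i0 S / (1 + (\<Sum>l\<in>{..<m}-{j,i0}. \<sigma> l R)) - 1 \<le> exp_payoff m (\<sigma>(j := pure_strategy R)) j"
proof -
  let ?\<sigma> = "\<sigma>(j := pure_strategy R)" and ?O = "{..<m}-{j,i0}"
  define a where "a = (\<Sum>l\<in>?O. \<sigma> l R)"
  let ?F = "\<lambda>s. real m / (1 + a)^2 * ((1 + 2 * a) * of_bool (s i0 = S)
              - (\<Sum>l\<in>?O. of_bool (s i0 = S) * of_bool (s l = R))) - 1"
  have distr: "\<And>l. l < m \<Longrightarrow> (\<Sum>y\<in>UNIV. ?\<sigma> l y) = 1" using mixed by (rule pure_deviation_sum_eq_1)
  have bound: "expect m ?\<sigma> ?F \<le> exp_payoff m ?\<sigma> j"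
    unfolding exp_payoff_eq_expect
  proof (rule expect_mono)
    fix s assume supp: "\<And>l. l < m \<Longrightarrow> ?\<sigma> l (s l) \<noteq> 0"
    show "?F s \<le> payoff m s j"
    proof (rule payoff_R_with_rival_ge[OF j i0])
      show "s j = R" using supp[OF j] by (simp add: pure_strategy_def)
      show "s i0 \<noteq> R" using supp[OF i0(1)] i0(2) no_R by auto
      show "s l \<noteq> S" if "l < m" "l \<noteq> j" "l \<noteq> i0" for l
        using supp[OF that(1)] that no_S by auto
    qed
  qed (use mixed pure_deviation_nonneg in blast)
  have "(\<Sum>l\<in>?O. expect m ?\<sigma> (\<lambda>s. of_bool (s i0 = S) * of_bool (s l = R))) = \<sigma> i0 S * a"
    unfolding a_def sum_distrib_left using i0 by (intro sum.cong) (auto simp: expect_indicator_pair[OF _ _ _ distr])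
  then have "expect m ?\<sigma> ?F = real m / (1 + a)^2 * ((1 + 2 * a) * \<sigma> i0 S - \<sigma> i0 S * a) - 1"
    using i0 by (simp only: expect_diff expect_cmult expect_sum expect_const[OF distr] expect_indicator[OF _ distr])
      simp
  also have "\<dots> = real m * \<sigma> i0 S / (1 + a) - 1"
  proof -
    have "0 \<le> a" unfolding a_def using mixed by (intro sum_nonneg) (auto intro: mixed_profile_nonneg)
    then have "1 + a \<noteq> 0" by simp
    moreover have "(1 + 2 * a) * \<sigma> i0 S - \<sigma> i0 S * a = \<sigma> i0 S * (1 + a)" by algebra
    ultimately show ?thesis by (simp add: power2_eq_square)
  qed
  finally show ?thesis using bound unfolding a_def by simp
qed

(* The polynomial of the following lemmas is 2n(A(n + 1 + \<rho>) - 1) - (1 - A)(1 + \<rho>)A(n + \<rho>),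
   expanded, with M = n + 1 (see lone_S_key_inequality). *)
lemma poly_middle_term_ge:
  fixes M n A \<rho> :: real
  assumes n: "0 \<le> n" "n = M - 1" and C: "M + \<rho> \<le> M^2 * A"
  shows "2 * n * (n * \<rho> - M) \<le> M^2 * (2 * n * (n * A - 1))"
proof -
  have "n * (M + \<rho>) \<le> n * (M^2 * A)" using C n by (intro mult_left_mono) auto
  then have "n * \<rho> - M \<le> n * (M^2 * A) - M^2" unfolding n(2) by (simp add: algebra_simps power2_eq_square)
  then have "2 * n * (n * \<rho> - M) \<le> 2 * n * (n * (M^2 * A) - M^2)" using n by (intro mult_left_mono) auto
  then show ?thesis by (simp add: algebra_simps)
qed

lemma poly_pos_large_rho:
  fixes M n A \<rho> :: real
  assumes M: "2 \<le> M" and n: "n = M - 1" and \<rho>: "1 \<le> \<rho>" "\<rho> \<le> n" and A: "0 \<le> A"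
    and C: "M + \<rho> \<le> M^2 * A"
  shows "0 < A * (1 + \<rho>) * (n - \<rho>) + 2 * n * (n * A - 1) + A^2 * (1 + \<rho>) * (n + \<rho>)"
proof -
  have t1: "0 \<le> M^2 * (A * (1 + \<rho>) * (n - \<rho>))" using A \<rho> by simp
  have "n * 1 \<le> n * \<rho>" using \<rho> n M by (intro mult_left_mono) auto
  then have "-1 \<le> n * \<rho> - M" using n by simp
  then have "2 * n * (-1) \<le> 2 * n * (n * \<rho> - M)" using n M by (intro mult_left_mono) auto
  moreover have "0 \<le> n" using n M by simp
  ultimately have t2: "-2 * n \<le> M^2 * (2 * n * (n * A - 1))"
    using poly_middle_term_ge[OF _ n C] by linarith
  have "M * 1 \<le> M * (M * A)" using C \<rho> by (simp add: power2_eq_square algebra_simps)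
  then have "1 \<le> (M * A)^2" using M by (simp add: one_le_power)
  moreover have "2 * M \<le> (1 + \<rho>) * (n + \<rho>)" using mult_mono[of 2 "1 + \<rho>" M "n + \<rho>"] M \<rho> n by simp
  ultimately have "1 * (2 * M) \<le> (M * A)^2 * ((1 + \<rho>) * (n + \<rho>))"
    by (rule mult_mono) (use M in auto)
  then have t3: "2 * M \<le> M^2 * (A^2 * (1 + \<rho>) * (n + \<rho>))" by (simp add: power_mult_distrib algebra_simps)
  have "0 < M^2 * (A * (1 + \<rho>) * (n - \<rho>) + 2 * n * (n * A - 1) + A^2 * (1 + \<rho>) * (n + \<rho>))"
    using t1 t2 t3 n by (simp add: distrib_left)
  then show ?thesis using M by (simp add: zero_less_mult_iff)
qed

lemma poly_pos_rho_zero: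
  fixes n A :: real
  assumes n: "1 \<le> n" and A: "1 \<le> A"
  shows "0 < A * n + 2 * n * (n * A - 1) + A^2 * n"
proof -
  have "1 \<le> n * A" using mult_mono[of 1 n 1 A] A n by simp
  then have "0 \<le> 2 * n * (n * A - 1)" using n by simp
  moreover have "0 < A * n" "0 \<le> A^2 * n" using A n by auto
  ultimately show ?thesis by linarith
qed

lemma poly_pos_small_rho:
  fixes M n A \<rho> :: real
  assumes M: "3 \<le> M" and n: "n = M - 1" and \<rho>: "0 < \<rho>" "\<rho> < 1"
    and C1: "1 - \<rho> \<le> A" and C2: "M + \<rho> \<le> M^2 * A"
  shows "0 < A * (1 + \<rho>) * (n - \<rho>) + 2 * n * (n * A - 1) + A^2 * (1 + \<rho>) * (n + \<rho>)"
proof -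
  define B where "B = M^2 * A"
  define q where "q = (1 + \<rho>) * (n - \<rho>)"
  have n2: "2 \<le> n" using M n by simp
  have "0 \<le> q" unfolding q_def using \<rho> n2 by simp
  have "M \<le> B" using C2 \<rho> unfolding B_def by simp
  have f1: "M^2 * (A * (1 + \<rho>) * (n - \<rho>)) = B * q" unfolding B_def q_def by (simp add: algebra_simps)
  have f2: "M * q \<le> B * q" using \<open>M \<le> B\<close> \<open>0 \<le> q\<close> by (rule mult_right_mono)
  have "\<rho> * \<rho> \<le> \<rho> * 1" using \<rho> by (intro mult_left_mono) auto
  then have "n + n * \<rho> - 2 * \<rho> \<le> q" unfolding q_def by (simp add: algebra_simps)
  then have f3: "M * (n + n * \<rho> - 2 * \<rho>) \<le> M * q" using M by (intro mult_left_mono) auto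
  have f4: "2 * n * (n * \<rho> - M) \<le> M^2 * (2 * n * (n * A - 1))"
    using poly_middle_term_ge[of n M \<rho> A] n n2 C2 by simp
  have g1: "M * (1 - \<rho>) \<le> B * A" using \<open>M \<le> B\<close> C1 M \<rho> by (intro mult_mono) auto
  have g2: "1 * n \<le> (1 + \<rho>) * (n + \<rho>)" using \<rho> n2 by (intro mult_mono) auto
  have "0 \<le> M * (1 - \<rho>)" using M \<rho> by simp
  then have "M * (1 - \<rho>) * (1 * n) \<le> B * A * ((1 + \<rho>) * (n + \<rho>))"
    using g1 n2 by (intro mult_mono[OF g1 g2]) auto
  then have f5: "M * (1 - \<rho>) * n \<le> M^2 * (A^2 * (1 + \<rho>) * (n + \<rho>))"
    unfolding B_def by (simp add: algebra_simps power2_eq_square)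
  have "2 * n \<le> n * n" using mult_right_mono[of 2 n n] n2 by simp
  then have "1 \<le> n * n - n - 1" using n2 by linarith
  then have "\<rho> * 1 \<le> \<rho> * (n * n - n - 1)" using \<rho> by (intro mult_left_mono) auto
  moreover have "M * (n + n * \<rho> - 2 * \<rho>) + 2 * n * (n * \<rho> - M) + M * (1 - \<rho>) * n
      = 2 * (\<rho> * (n * n - n - 1))"
    unfolding n by (simp add: algebra_simps)
  ultimately have "2 * \<rho> \<le> M * (n + n * \<rho> - 2 * \<rho>) + 2 * n * (n * \<rho> - M) + M * (1 - \<rho>) * n"
    by linarith
  then have "0 < M^2 * (A * (1 + \<rho>) * (n - \<rho>) + 2 * n * (n * A - 1) + A^2 * (1 + \<rho>) * (n + \<rho>))"
    using f1 f2 f3 f4 f5 \<rho> unfolding distrib_left by linarith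
  then show ?thesis using M by (simp add: zero_less_mult_iff)
qed

lemma poly_pos_two_players:
  fixes A \<rho> :: real
  assumes \<rho>: "0 \<le> \<rho>" "\<rho> \<le> 1" and C1: "1 - \<rho> \<le> A" and C2: "2 + \<rho> \<le> 4 * A"
  shows "0 < A * (1 + \<rho>) * (1 - \<rho>) + 2 * (A - 1) + A^2 * (1 + \<rho>) * (1 + \<rho>)"
proof -
  define u where "u = A * (1 + \<rho>)"
  have "21/25 \<le> u"
  proof (cases "\<rho> \<le> 2/5")
    case True
    have "\<rho> * \<rho> \<le> 2/5 * (2/5)" using True \<rho> by (intro mult_mono) auto
    moreover have "(1 - \<rho>) * (1 + \<rho>) \<le> u" unfolding u_def using C1 \<rho> by (intro mult_right_mono) auto
    ultimately show ?thesis by (simp add: algebra_simps)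
  next
    case False
    then have "3/5 * (7/5) \<le> u" unfolding u_def using C2 by (intro mult_mono) auto
    then show ?thesis by simp
  qed
  then have "21/25 * (21/25) \<le> u * u" and "21/25 * (1 - \<rho>) \<le> u * (1 - \<rho>)"
    using \<rho> by (intro mult_mono mult_right_mono; simp)+
  moreover have "0 < w + 2 * (A - 1) + v" if "21/25 * (21/25) \<le> v" "21/25 * (1 - \<rho>) \<le> w" for v w
    using that C2 \<rho> by argo
  ultimately have "0 < u * (1 - \<rho>) + 2 * (A - 1) + u * u" by blast
  also have "\<dots> = A * (1 + \<rho>) * (1 - \<rho>) + 2 * (A - 1) + A^2 * (1 + \<rho>) * (1 + \<rho>)"
    unfolding u_def by (simp add: power2_eq_square algebra_simps)
  finally show ?thesis .
qed

lemma lone_S_key_inequality: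
  fixes M A \<rho> :: real
  assumes M: "M = 2 \<or> 3 \<le> M" and \<rho>: "0 \<le> \<rho>" "\<rho> \<le> M - 1"
    and C1: "1 - \<rho> \<le> A" and C2: "M + \<rho> \<le> M^2 * A"
  shows "(1 - A) * (1 + \<rho>) * (A * (M - 1 + \<rho>)) < 2 * (M - 1) * (A * (M + \<rho>) - 1)"
proof -
  define n where "n = M - 1"
  have "0 < M^2 * A" using C2 M \<rho> by linarith
  then have "0 \<le> A" by (simp add: zero_less_mult_iff)
  have "0 < A * (1 + \<rho>) * (n - \<rho>) + 2 * n * (n * A - 1) + A^2 * (1 + \<rho>) * (n + \<rho>)"
  proof (cases "M = 2")
    case True
    then show ?thesis using poly_pos_two_players[of \<rho> A] \<rho> C1 C2 unfolding n_def by simp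
  next
    case False
    then have "3 \<le> M" using M by simp
    consider "1 \<le> \<rho>" | "\<rho> = 0" | "0 < \<rho>" "\<rho> < 1" using \<rho> by linarith
    then show ?thesis
    proof cases
      case 1
      with \<open>3 \<le> M\<close> show ?thesis using poly_pos_large_rho \<rho> \<open>0 \<le> A\<close> C2 n_def by simp
    next
      case 2
      with \<open>3 \<le> M\<close> show ?thesis using poly_pos_rho_zero[of n A] C1 n_def by simp
    next
      case 3
      with \<open>3 \<le> M\<close> show ?thesis using poly_pos_small_rho C1 C2 n_def by simp
    qed
  qed
  moreover have "2 * n * (A * (M + \<rho>) - 1) - (1 - A) * (1 + \<rho>) * (A * (n + \<rho>))
      = A * (1 + \<rho>) * (n - \<rho>) + 2 * n * (n * A - 1) + A^2 * (1 + \<rho>) * (n + \<rho>)"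
    unfolding n_def by (simp add: power2_eq_square algebra_simps)
  ultimately show ?thesis unfolding n_def by linarith
qed

(* M players, one of whom puts weight s on S; A is the probability that the others all play P, and
   \<rho> is their total weight on R. C1 is the Weierstrass product inequality, C2 says that deviating
   to P does not beat the value M A - 1 of the lone S-player, and S_dev, R_dev come from the other
   players' deviations to S and to R. *)
lemma lone_S_constraints_infeasible:
  fixes M A \<rho> s :: real
  assumes M: "M = 2 \<or> 3 \<le> M" and \<rho>: "0 \<le> \<rho>" "\<rho> \<le> M - 1"
    and C1: "1 - \<rho> \<le> A" and C2: "M + \<rho> \<le> M^2 * A"
    and S_dev: "A * (1 - s / 2) * (M - 1 + \<rho>) \<le> 1 - A"
    and R_dev: "(M - 1) * s \<le> (1 - A) * (1 + \<rho>)"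
  shows False
proof -
  have "0 < M^2 * A" using C2 M \<rho> by linarith
  then have "0 \<le> A * (M - 1 + \<rho>)" using M \<rho> by (simp add: zero_less_mult_iff)
  have "A * (1 - s / 2) * (M - 1 + \<rho>) = A * (M - 1 + \<rho>) - s / 2 * (A * (M - 1 + \<rho>))"
    and "A * (M + \<rho>) - 1 = A * (M - 1 + \<rho>) + A - 1" by (simp_all add: field_simps)
  then have "A * (M + \<rho>) - 1 \<le> s / 2 * (A * (M - 1 + \<rho>))" using S_dev by linarith
  then have "2 * (M - 1) * (A * (M + \<rho>) - 1) \<le> 2 * (M - 1) * (s / 2 * (A * (M - 1 + \<rho>)))"
    using M by (intro mult_left_mono) auto
  also have "\<dots> = (M - 1) * s * (A * (M - 1 + \<rho>))" by (simp add: field_simps)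
  also have "\<dots> \<le> (1 - A) * (1 + \<rho>) * (A * (M - 1 + \<rho>))"
    using R_dev \<open>0 \<le> A * (M - 1 + \<rho>)\<close> by (rule mult_right_mono)
  finally show False using lone_S_key_inequality[OF M \<rho> C1 C2] by linarith
qed

lemma mixed_profile_without_S:
  assumes "mixed_profile m \<sigma>" and "l < m" and "\<sigma> l S = 0"
  shows "\<sigma> l P = 1 - \<sigma> l R" and "\<sigma> l R \<in> {0..1}"
  using mixed_profile_sum[OF assms(1,2)] assms(3)
    mixed_profile_nonneg[OF assms(1,2), of P] mixed_profile_nonneg[OF assms(1,2), of R]
  by (auto simp: sum_UNIV_obj)

lemma prod_P_ge_without_S:
  assumes "mixed_profile m \<sigma>" and "L \<subseteq> {..<m}" and "\<And>l. l \<in> L \<Longrightarrow> \<sigma> l S = 0"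
  shows "1 - (\<Sum>l\<in>L. \<sigma> l R) \<le> (\<Prod>l\<in>L. \<sigma> l P)"
proof -
  have "(\<Prod>l\<in>L. \<sigma> l P) = (\<Prod>l\<in>L. 1 - \<sigma> l R)"
    using assms mixed_profile_without_S(1) by (intro prod.cong) auto
  moreover have "1 - (\<Sum>l\<in>L. \<sigma> l R) \<le> (\<Prod>l\<in>L. 1 - \<sigma> l R)"
    using assms mixed_profile_without_S(2) by (intro Weierstrass_prod_ineq) auto
  ultimately show ?thesis by simp
qed

lemma nash_eq_someone_plays_S:
  assumes m: "2 \<le> m" and eq: "nash_eq m \<sigma>"
  shows "\<exists>i<m. 0 < \<sigma> i S"
proof (rule ccontr)
  assume none: "\<not> (\<exists>i<m. 0 < \<sigma> i S)"
  have mixed: "mixed_profile m \<sigma>" using eq by (rule nash_eq_mixed_profile)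
  then have no_S: "\<sigma> l S = 0" if "l < m" for l
    using none mixed_profile_nonneg[OF mixed that, of S] that by force
  have "0 < exp_payoff m \<sigma> i" if i: "i < m" for i
  proof -
    define \<rho> where "\<rho> = (\<Sum>l\<in>{..<m}-{i}. \<sigma> l R)"
    have "\<rho> / m \<le> exp_payoff m (\<sigma>(i := pure_strategy P)) i"
      unfolding \<rho>_def by (rule exp_payoff_deviate_P_ge[OF mixed i]) (simp add: no_S)
    then have P_dev: "\<rho> / m \<le> exp_payoff m \<sigma> i" using nash_eq_pure_deviation[OF eq i, of P] by simp
    have "exp_payoff m (\<sigma>(i := pure_strategy S)) i = real m * (\<Prod>l\<in>{..<m}-{i}. \<sigma> l P) - 1"
      by (rule exp_payoff_deviate_lone_S[OF mixed i]) (simp add: no_S)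
    then have S_dev: "real m * (\<Prod>l\<in>{..<m}-{i}. \<sigma> l P) - 1 \<le> exp_payoff m \<sigma> i"
      using nash_eq_pure_deviation[OF eq i, of S] by simp
    have "1 - \<rho> \<le> (\<Prod>l\<in>{..<m}-{i}. \<sigma> l P)"
      unfolding \<rho>_def using mixed no_S by (intro prod_P_ge_without_S) auto
    have "0 \<le> \<rho>" unfolding \<rho>_def using mixed by (intro sum_nonneg) (auto intro: mixed_profile_nonneg)
    show ?thesis
    proof (cases "\<rho> = 0")
      case True
      then have "real m * 1 \<le> real m * (\<Prod>l\<in>{..<m}-{i}. \<sigma> l P)"
        using \<open>1 - \<rho> \<le> _\<close> by (intro mult_left_mono) auto
      then show ?thesis using S_dev m by linarith
    next
      case False
      then have "0 < \<rho> / m" using \<open>0 \<le> \<rho>\<close> m by simp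
      then show ?thesis using P_dev by linarith
    qed
  qed
  then have "0 < (\<Sum>i<m. exp_payoff m \<sigma> i)" using m by (intro sum_pos) (auto simp: lessThan_empty_iff)
  then show False by (simp add: exp_payoff_sum_zero)
qed

lemma lone_S_player_value:
  assumes eq: "nash_eq m \<sigma>" and i0: "i0 < m" "0 < \<sigma> i0 S"
    and no_S: "\<And>l. l < m \<Longrightarrow> l \<noteq> i0 \<Longrightarrow> \<sigma> l S = 0"
  shows "exp_payoff m \<sigma> i0 = real m * (\<Prod>l\<in>{..<m}-{i0}. \<sigma> l P) - 1"
    and "(\<Sum>l\<in>{..<m}-{i0}. \<sigma> l R) / m \<le> exp_payoff m \<sigma> i0"
proof -
  have mixed: "mixed_profile m \<sigma>" using eq by (rule nash_eq_mixed_profile)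
  show "exp_payoff m \<sigma> i0 = real m * (\<Prod>l\<in>{..<m}-{i0}. \<sigma> l P) - 1"
    using nash_eq_indifferent_on_support[OF eq i0] exp_payoff_deviate_lone_S[OF mixed i0(1) no_S] by simp
  show "(\<Sum>l\<in>{..<m}-{i0}. \<sigma> l R) / m \<le> exp_payoff m \<sigma> i0"
    using exp_payoff_deviate_P_ge[OF mixed i0(1) no_S] nash_eq_pure_deviation[OF eq i0(1), of P] by simp
qed

lemma lone_S_player_avoids_R:
  assumes m: "2 \<le> m" and eq: "nash_eq m \<sigma>" and i0: "i0 < m" "0 < \<sigma> i0 S"
    and no_S: "\<And>l. l < m \<Longrightarrow> l \<noteq> i0 \<Longrightarrow> \<sigma> l S = 0"
  shows "\<sigma> i0 R = 0"
proof (rule ccontr)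
  assume "\<sigma> i0 R \<noteq> 0"
  have mixed: "mixed_profile m \<sigma>" using eq by (rule nash_eq_mixed_profile)
  define \<rho> where "\<rho> = (\<Sum>l\<in>{..<m}-{i0}. \<sigma> l R)"
  have "0 < \<sigma> i0 R" using \<open>\<sigma> i0 R \<noteq> 0\<close> mixed_profile_nonneg[OF mixed i0(1), of R] by simp
  then have "exp_payoff m \<sigma> i0 \<le> 0"
    using nash_eq_indifferent_on_support[OF eq i0(1)] exp_payoff_deviate_R_nonpos[OF mixed i0(1) no_S] by simp
  then have "\<rho> / m \<le> 0" using lone_S_player_value(2)[OF eq i0 no_S] unfolding \<rho>_def by linarith
  then have "\<rho> \<le> 0" using m by (simp add: divide_le_0_iff)
  moreover have "1 - \<rho> \<le> (\<Prod>l\<in>{..<m}-{i0}. \<sigma> l P)"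
    unfolding \<rho>_def using mixed no_S by (intro prod_P_ge_without_S) auto
  ultimately have "real m * 1 \<le> real m * (\<Prod>l\<in>{..<m}-{i0}. \<sigma> l P)" by (intro mult_left_mono) auto
  moreover have "2 \<le> real m" using m by simp
  ultimately show False using \<open>exp_payoff m \<sigma> i0 \<le> 0\<close> lone_S_player_value(1)[OF eq i0 no_S] by linarith
qed

lemma lone_S_rival_value_ge:
  assumes eq: "nash_eq m \<sigma>" and i0: "i0 < m" and j: "j < m" "j \<noteq> i0"
    and no_S: "\<And>l. l < m \<Longrightarrow> l \<noteq> i0 \<Longrightarrow> \<sigma> l S = 0" and no_R: "\<sigma> i0 R = 0"
  shows "real m * (1 - \<sigma> i0 S / 2) * (\<Prod>l\<in>{..<m}-{i0}. \<sigma> l P) * (1 + \<sigma> j R) - 1 \<le> exp_payoff m \<sigma> j"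
    and "real m * \<sigma> i0 S / (1 + (\<Sum>l\<in>{..<m}-{i0}. \<sigma> l R)) - 1 \<le> exp_payoff m \<sigma> j"
proof -
  have mixed: "mixed_profile m \<sigma>" using eq by (rule nash_eq_mixed_profile)
  have split: "{..<m}-{i0} = insert j ({..<m}-{j,i0})" using j by auto
  have nonneg: "0 \<le> \<sigma> l x" if "l < m" for l x using mixed that by (rule mixed_profile_nonneg)
  have "\<sigma> i0 S \<le> 1" using mixed_profile_sum[OF mixed i0] nonneg[OF i0, of R] nonneg[OF i0, of P]
    by (simp add: sum_UNIV_obj)
  define C where "C = (\<Prod>l\<in>{..<m}-{j,i0}. \<sigma> l P)"
  have "0 \<le> C" unfolding C_def using nonneg by (intro prod_nonneg) auto
  have "(\<Prod>l\<in>{..<m}-{i0}. \<sigma> l P) * (1 + \<sigma> j R) = (1 - \<sigma> j R * \<sigma> j R) * C"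
    unfolding split C_def by (simp add: mixed_profile_without_S(1)[OF mixed j(1) no_S[OF j]] algebra_simps)
  also have "\<dots> \<le> C" using \<open>0 \<le> C\<close> by (simp add: algebra_simps)
  finally have "real m * (1 - \<sigma> i0 S / 2) * ((\<Prod>l\<in>{..<m}-{i0}. \<sigma> l P) * (1 + \<sigma> j R))
      \<le> real m * (1 - \<sigma> i0 S / 2) * C"
    using \<open>\<sigma> i0 S \<le> 1\<close> by (intro mult_left_mono) auto
  then show "real m * (1 - \<sigma> i0 S / 2) * (\<Prod>l\<in>{..<m}-{i0}. \<sigma> l P) * (1 + \<sigma> j R) - 1 \<le> exp_payoff m \<sigma> j"
    using exp_payoff_deviate_S_with_rival[OF mixed j(1) i0 j(2) no_S no_R]
      nash_eq_pure_deviation[OF eq j(1), of S] unfolding C_def by (simp add: mult.assoc)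
  define a where "a = (\<Sum>l\<in>{..<m}-{j,i0}. \<sigma> l R)"
  have "0 \<le> a" unfolding a_def using nonneg by (intro sum_nonneg) auto
  moreover have "(\<Sum>l\<in>{..<m}-{i0}. \<sigma> l R) = \<sigma> j R + a" unfolding split a_def by simp
  ultimately have "real m * \<sigma> i0 S / (1 + (\<Sum>l\<in>{..<m}-{i0}. \<sigma> l R)) \<le> real m * \<sigma> i0 S / (1 + a)"
    using nonneg[OF j(1), of R] nonneg[OF i0, of S] by (intro divide_left_mono) auto
  then show "real m * \<sigma> i0 S / (1 + (\<Sum>l\<in>{..<m}-{i0}. \<sigma> l R)) - 1 \<le> exp_payoff m \<sigma> j"
    using exp_payoff_deviate_R_with_rival_ge[OF mixed j(1) i0 j(2) no_S no_R]
      nash_eq_pure_deviation[OF eq j(1), of R] unfolding a_def by linarith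
qed

lemma lone_S_rivals_total_ge:
  assumes eq: "nash_eq m \<sigma>" and i0: "i0 < m"
    and no_S: "\<And>l. l < m \<Longrightarrow> l \<noteq> i0 \<Longrightarrow> \<sigma> l S = 0" and no_R: "\<sigma> i0 R = 0"
  defines "A \<equiv> \<Prod>l\<in>{..<m}-{i0}. \<sigma> l P" and "\<rho> \<equiv> \<Sum>l\<in>{..<m}-{i0}. \<sigma> l R"
  shows "real m * (1 - \<sigma> i0 S / 2) * A * (real m - 1 + \<rho>) - (real m - 1) \<le> (\<Sum>j\<in>{..<m}-{i0}. exp_payoff m \<sigma> j)"
    and "(real m - 1) * (real m * \<sigma> i0 S / (1 + \<rho>) - 1) \<le> (\<Sum>j\<in>{..<m}-{i0}. exp_payoff m \<sigma> j)"
proof -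
  have card: "real (card ({..<m}-{i0})) = real m - 1" using i0 by (simp add: of_nat_diff)
  have "(\<Sum>j\<in>{..<m}-{i0}. real m * (1 - \<sigma> i0 S / 2) * A * (1 + \<sigma> j R) - 1)
      \<le> (\<Sum>j\<in>{..<m}-{i0}. exp_payoff m \<sigma> j)"
    using lone_S_rival_value_ge(1)[OF eq i0 _ _ no_S no_R] unfolding A_def by (intro sum_mono) auto
  moreover have "(\<Sum>j\<in>{..<m}-{i0}. real m * (1 - \<sigma> i0 S / 2) * A * (1 + \<sigma> j R) - 1)
      = real m * (1 - \<sigma> i0 S / 2) * A * (real m - 1 + \<rho>) - (real m - 1)"
    unfolding \<rho>_def using card by (simp add: sum_subtractf sum.distrib flip: sum_distrib_left)
  ultimately show "real m * (1 - \<sigma> i0 S / 2) * A * (real m - 1 + \<rho>) - (real m - 1)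
      \<le> (\<Sum>j\<in>{..<m}-{i0}. exp_payoff m \<sigma> j)" by simp
  have "(\<Sum>j\<in>{..<m}-{i0}. real m * \<sigma> i0 S / (1 + \<rho>) - 1) \<le> (\<Sum>j\<in>{..<m}-{i0}. exp_payoff m \<sigma> j)"
    using lone_S_rival_value_ge(2)[OF eq i0 _ _ no_S no_R] unfolding \<rho>_def by (intro sum_mono) auto
  then show "(real m - 1) * (real m * \<sigma> i0 S / (1 + \<rho>) - 1) \<le> (\<Sum>j\<in>{..<m}-{i0}. exp_payoff m \<sigma> j)"
    using card by simp
qed

lemma nash_eq_second_S_player:
  assumes m: "2 \<le> m" and eq: "nash_eq m \<sigma>" and i0: "i0 < m" "0 < \<sigma> i0 S"
  shows "\<exists>j<m. j \<noteq> i0 \<and> 0 < \<sigma> j S"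
proof (rule ccontr)
  assume none: "\<not> (\<exists>j<m. j \<noteq> i0 \<and> 0 < \<sigma> j S)"
  have mixed: "mixed_profile m \<sigma>" using eq by (rule nash_eq_mixed_profile)
  have no_S: "\<sigma> l S = 0" if "l < m" "l \<noteq> i0" for l
    using none mixed_profile_nonneg[OF mixed that(1), of S] that by force
  have no_R: "\<sigma> i0 R = 0" by (rule lone_S_player_avoids_R[OF m eq i0 no_S])
  define A where "A = (\<Prod>l\<in>{..<m}-{i0}. \<sigma> l P)"
  define \<rho> where "\<rho> = (\<Sum>l\<in>{..<m}-{i0}. \<sigma> l R)"
  define M where "M = real m"
  have M: "M = 2 \<or> 3 \<le> M" "0 < M" unfolding M_def using m by auto
  have i0_value: "exp_payoff m \<sigma> i0 = M * A - 1" "\<rho> / M \<le> M * A - 1"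
    using lone_S_player_value[OF eq i0 no_S] unfolding A_def \<rho>_def M_def by auto
  have R_bounds: "\<sigma> l R \<in> {0..1}" if "l \<in> {..<m}-{i0}" for l
    using mixed_profile_without_S(2)[OF mixed _ no_S] that by auto
  have "0 \<le> \<rho>" unfolding \<rho>_def using R_bounds by (intro sum_nonneg) auto
  have "\<rho> \<le> (\<Sum>l\<in>{..<m}-{i0}. 1)" unfolding \<rho>_def using R_bounds by (intro sum_mono) auto
  then have "\<rho> \<le> M - 1" using i0 unfolding M_def by (simp add: of_nat_diff)
  have C1: "1 - \<rho> \<le> A" unfolding A_def \<rho>_def using mixed no_S by (intro prod_P_ge_without_S) auto
  have C2: "M + \<rho> \<le> M^2 * A"
    using mult_left_mono[OF i0_value(2), of M] M by (simp add: algebra_simps power2_eq_square)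
  have zero_sum: "exp_payoff m \<sigma> i0 + (\<Sum>j\<in>{..<m}-{i0}. exp_payoff m \<sigma> j) = 0"
    using exp_payoff_sum_zero[of m \<sigma>] i0 by (simp add: sum.remove)
  note rivals = lone_S_rivals_total_ge[OF eq i0(1) no_S no_R, folded A_def \<rho>_def M_def]
  have "M * (A * (1 - \<sigma> i0 S / 2) * (M - 1 + \<rho>)) \<le> M * (1 - A)"
    using rivals(1) zero_sum i0_value(1) by (simp add: algebra_simps)
  then have S_dev: "A * (1 - \<sigma> i0 S / 2) * (M - 1 + \<rho>) \<le> 1 - A"
    using M(2) by (rule mult_left_le_imp_le)
  have "M * ((M - 1) * \<sigma> i0 S / (1 + \<rho>)) \<le> M * (1 - A)"
    using rivals(2) zero_sum i0_value(1) by (simp add: algebra_simps)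
  then have "(M - 1) * \<sigma> i0 S / (1 + \<rho>) \<le> 1 - A"
    using M(2) by (rule mult_left_le_imp_le)
  then have R_dev: "(M - 1) * \<sigma> i0 S \<le> (1 - A) * (1 + \<rho>)"
    using \<open>0 \<le> \<rho>\<close> by (simp add: divide_le_eq)
  show False
    using lone_S_constraints_infeasible[OF M(1) \<open>0 \<le> \<rho>\<close> \<open>\<rho> \<le> M - 1\<close> C1 C2 S_dev R_dev] .
qed

theorem mainTheorem4:
  fixes m :: nat and \<sigma> :: "nat \<Rightarrow> obj \<Rightarrow> real"
  assumes "2 \<le> m" and "m < 50" and "nash_eq m \<sigma>"
  shows "2 \<le> card {i. i < m \<and> \<sigma> i S > 0}"
proof -
  obtain i where i: "i < m" "0 < \<sigma> i S"
    using nash_eq_someone_plays_S[OF assms(1,3)] by blast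
  then obtain j where j: "j < m" "j \<noteq> i" "0 < \<sigma> j S"
    using nash_eq_second_S_player[OF assms(1,3)] by blast
  have "card {i, j} \<le> card {i. i < m \<and> \<sigma> i S > 0}"
    using i j by (intro card_mono) auto
  then show ?thesis using j(2) by simp
qed

end
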